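(* Let $X$ be a reflexive Banach space. If $X$ contains a $\mathfrak{D}$-point, then both $X$ and $X^*$ contain a sequential super $\Delta$-point; in particular neither $X$ nor $X^*$ has the Kadets–Klee property.
   Context: For $x\in S_X$ let $D(x)=\{x^*\in S_{X^*}:x^*(x)=1\}$ and $S(x^*,\varepsilon)=\{y\in B_X:x^*(y)>1-\varepsilon\}$. A point $x\in S_X$ is a $\mathfrak{D}$-point if $\sup_{y\in S(x^*,\varepsilon)}\|x-y\|=2$ for every $x^*\in D(x)$ and $\varepsilon>0$. A point $x\in S_X$ is a sequential super $\Delta$-point if there is a sequence $(x_n)$ in $S_X$ converging weakly to $x$ with $\|x-x_n\|\to2$. A Banach space $Z$ has the Kadets–Klee property if for every sequence $(z_n)$ in $S_Z$ and every $z\in S_Z$, $z_n\to z$ weakly if and only if $\|z-z_n\|\to0$. *)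

theory Defs
  imports "HOL-Analysis.Analysis"
begin

definition unit_sphere :: "'a::real_normed_vector set" where
  "unit_sphere = {x. norm x = 1}"

definition unit_ball :: "'a::real_normed_vector set" where
  "unit_ball = {x. norm x \<le> 1}"

definition reflexive_space :: "'a::banach itself \<Rightarrow> bool" where
  "reflexive_space _ \<longleftrightarrow>
     (\<forall>\<phi> :: ('a \<Rightarrow>\<^sub>L real) \<Rightarrow>\<^sub>L real. \<exists>x::'a. \<forall>f. blinfun_apply \<phi> f = blinfun_apply f x)"

definition weakly_convergent_to :: "(nat \<Rightarrow> 'a::real_normed_vector) \<Rightarrow> 'a \<Rightarrow> bool" where
  "weakly_convergent_to xs x \<longleftrightarrow>
     (\<forall>f :: 'a \<Rightarrow>\<^sub>L real. (\<lambda>n. blinfun_apply f (xs n)) \<longlonglongrightarrow> blinfun_apply f x)"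

definition norming_functionals :: "'a::real_normed_vector \<Rightarrow> ('a \<Rightarrow>\<^sub>L real) set" where
  "norming_functionals x = {f. norm f = 1 \<and> blinfun_apply f x = 1}"

definition slice :: "('a::real_normed_vector \<Rightarrow>\<^sub>L real) \<Rightarrow> real \<Rightarrow> 'a set" where
  "slice f \<epsilon> = {y \<in> unit_ball. blinfun_apply f y > 1 - \<epsilon>}"

definition is_D_point :: "'a::real_normed_vector \<Rightarrow> bool" where
  "is_D_point x \<longleftrightarrow> x \<in> unit_sphere \<and>
     (\<forall>f \<in> norming_functionals x. \<forall>\<epsilon>>0. (SUP y\<in>slice f \<epsilon>. norm (x - y)) = 2)"

definition is_seq_super_Delta_point :: "'a::real_normed_vector \<Rightarrow> bool" where
  "is_seq_super_Delta_point x \<longleftrightarrow> x \<in> unit_sphere \<and>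
     (\<exists>xs. (\<forall>n. xs n \<in> unit_sphere) \<and> weakly_convergent_to xs x \<and>
           (\<lambda>n. norm (x - xs n)) \<longlonglongrightarrow> 2)"

definition kadets_klee :: "'a::real_normed_vector itself \<Rightarrow> bool" where
  "kadets_klee _ \<longleftrightarrow>
     (\<forall>(zs :: nat \<Rightarrow> 'a) z. (\<forall>n. zs n \<in> unit_sphere) \<longrightarrow> z \<in> unit_sphere \<longrightarrow>
        (weakly_convergent_to zs z \<longleftrightarrow> (\<lambda>n. norm (z - zs n)) \<longlonglongrightarrow> 0))"

end

theory Submission
  imports Defs "HOL-Library.Diagonal_Subsequence"
begin

(*
  Fix a D-point x0 and phi in D(x0). Every slice of phi contains points y_n almost antipodal
  to x0, and functionals g_n norming x0 - y_n satisfy g_n(x0) -> 1 and g_n(y_n) -> -1. By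
  reflexivity of X and of its dual, the y_n and g_n have weakly convergent subsequences, with
  limits y' in the face of phi and g' in D(x0). Replacing phi by (phi + g')/2 and repeating, the
  faces shrink, so the limits of the successive stages satisfy g'_j(y'_k) = 1 for j < k; their
  weak limits y and g then satisfy g(y) = 1 = |y| = |g|. A diagonal choice among the y_n, g_n of
  all stages gives z_k -> y and w_k -> g weakly with w_k(z_k) -> -1, hence |y - z_k| -> 2
  (tested by w_k) and |g - w_k| -> 2 (tested at z_k): y and g are sequential super
  Delta-points, which is incompatible with the Kadets-Klee property.

  The weak topology is not metrizable, so the diagonal argument is carried out in a separable
  closed subspace, on whose bounded sets weak convergence is tested by countably many
  functionals; such functionals exist by Hahn-Banach (via Zorn's lemma) together with
  reflexivity.
*)

section \<open>Hahn--Banach extension and separation\<close>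

text \<open>Partial linear functionals are represented by their graphs, so that Zorn's lemma can be
  applied to set inclusion.\<close>

definition dominated_linear_graphs :: "real \<Rightarrow> ('a::real_normed_vector \<times> real) set \<Rightarrow> ('a \<times> real) set set" where
  "dominated_linear_graphs C M0 = {G.
     (\<forall>x a b. (x, a) \<in> G \<longrightarrow> (x, b) \<in> G \<longrightarrow> a = b) \<and>
     (\<forall>x a y b. (x, a) \<in> G \<longrightarrow> (y, b) \<in> G \<longrightarrow> (x + y, a + b) \<in> G) \<and>
     (\<forall>x a r. (x, a) \<in> G \<longrightarrow> (r *\<^sub>R x, r * a) \<in> G) \<and>
     (\<forall>x a. (x, a) \<in> G \<longrightarrow> a \<le> C * norm x) \<and> (0, 0) \<in> G \<and> M0 \<subseteq> G}"

context
  fixes G :: "('a::real_normed_vector \<times> real) set" and C M0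
  assumes G: "G \<in> dominated_linear_graphs C M0"
begin

lemma dlg_functional: "(x, a) \<in> G \<Longrightarrow> (x, b) \<in> G \<Longrightarrow> a = b"
  and dlg_add: "(x, a) \<in> G \<Longrightarrow> (y, b) \<in> G \<Longrightarrow> (x + y, a + b) \<in> G"
  and dlg_scaleR: "(x, a) \<in> G \<Longrightarrow> (r *\<^sub>R x, r * a) \<in> G"
  and dlg_bound: "(x, a) \<in> G \<Longrightarrow> a \<le> C * norm x"
  and dlg_zero: "(0, 0) \<in> G"
  and dlg_extends: "M0 \<subseteq> G"
  using G unfolding dominated_linear_graphs_def by blast+

lemma dlg_gap:
  assumes C: "0 \<le> C"
  obtains c where "\<And>y b. (y, b) \<in> G \<Longrightarrow> b - C * norm (y - x0) \<le> c"
    and "\<And>z e. (z, e) \<in> G \<Longrightarrow> c \<le> C * norm (z + x0) - e"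
proof -
  define L where "L = {b - C * norm (y - x0) | y b. (y, b) \<in> G}"
  have LR: "b - C * norm (y - x0) \<le> C * norm (z + x0) - e" if "(y, b) \<in> G" "(z, e) \<in> G" for y b z e
  proof -
    have "b + e \<le> C * norm (y + z)" using dlg_bound[OF dlg_add[OF that]] .
    also have "norm (y + z) \<le> norm (y - x0) + norm (z + x0)"
      using norm_triangle_ineq[of "y - x0" "z + x0"] by simp
    then have "C * norm (y + z) \<le> C * norm (y - x0) + C * norm (z + x0)"
      using C by (metis distrib_left mult_left_mono)
    finally show ?thesis by simp
  qed
  have "L \<noteq> {}" "bdd_above L" unfolding L_def bdd_above_def using LR dlg_zero by blast+
  then show ?thesis
    using that[of "Sup L"] LR by (auto intro!: cSup_upper cSup_least simp: L_def)
qed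

lemma dlg_bound_translate:
  assumes C: "0 \<le> C" and yb: "(y, b) \<in> G"
    and lower: "\<And>y b. (y, b) \<in> G \<Longrightarrow> b - C * norm (y - x0) \<le> c"
    and upper: "\<And>z e. (z, e) \<in> G \<Longrightarrow> c \<le> C * norm (z + x0) - e"
  shows "b + t * c \<le> C * norm (y + t *\<^sub>R x0)"
proof (cases t "0::real" rule: linorder_cases)
  case less
  define u where "u = - t"
  have u: "u > 0" using less u_def by simp
  have "(1/u) * b - C * norm ((1/u) *\<^sub>R y - x0) \<le> c" using lower[OF dlg_scaleR[OF yb]] .
  then have "b - C * (u * norm ((1/u) *\<^sub>R y - x0)) \<le> u * c"
    using u by (simp add: field_simps)
  also have "u * norm ((1/u) *\<^sub>R y - x0) = norm (u *\<^sub>R ((1/u) *\<^sub>R y - x0))" using u by simp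
  also have "u *\<^sub>R ((1/u) *\<^sub>R y - x0) = y + t *\<^sub>R x0" using u u_def by (simp add: algebra_simps)
  finally show ?thesis using u_def by simp
next
  case equal
  then show ?thesis using dlg_bound[OF yb] by simp
next
  case greater
  have "c \<le> C * norm ((1/t) *\<^sub>R y + x0) - (1/t) * b" using upper[OF dlg_scaleR[OF yb]] .
  then have "t * c \<le> C * (t * norm ((1/t) *\<^sub>R y + x0)) - b"
    using greater by (simp add: field_simps)
  also have "t * norm ((1/t) *\<^sub>R y + x0) = norm (t *\<^sub>R ((1/t) *\<^sub>R y + x0))" using greater by simp
  also have "t *\<^sub>R ((1/t) *\<^sub>R y + x0) = y + t *\<^sub>R x0" using greater by (simp add: algebra_simps)
  finally show ?thesis by simp
qed

lemma dlg_extend: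
  assumes C: "0 \<le> C" and x0: "\<And>a. (x0, a) \<notin> G"
  shows "\<exists>G' \<in> dominated_linear_graphs C M0. G \<subset> G'"
proof -
  obtain c where lower: "\<And>y b. (y, b) \<in> G \<Longrightarrow> b - C * norm (y - x0) \<le> c"
    and upper: "\<And>z e. (z, e) \<in> G \<Longrightarrow> c \<le> C * norm (z + x0) - e"
    using dlg_gap[OF C] by blast
  define G' where "G' = {(y + t *\<^sub>R x0, b + t * c) | y b t. (y, b) \<in> G}"
  have inG': "(y + t *\<^sub>R x0, b + t * c) \<in> G'" if "(y, b) \<in> G" for y b t
    using that unfolding G'_def by blast
  have unique: "b + t * c = b' + t' * c"
    if "(y, b) \<in> G" "(y', b') \<in> G" "y + t *\<^sub>R x0 = y' + t' *\<^sub>R x0" for y b t y' b' t'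
  proof (cases "t = t'")
    case True
    then show ?thesis using dlg_functional that by auto
  next
    case False
    have "(y' + (-1) *\<^sub>R y, b' + (-1) * b) \<in> G" using dlg_add[OF that(2) dlg_scaleR[OF that(1)]] .
    from dlg_scaleR[OF this, of "1 / (t - t')"]
    have "((1 / (t - t')) *\<^sub>R (y' - y), (1 / (t - t')) * (b' - b)) \<in> G" by simp
    moreover have "y' - y = (t - t') *\<^sub>R x0" using that(3) by (simp add: algebra_simps)
    ultimately show ?thesis using x0 False by auto
  qed
  have "G' \<in> dominated_linear_graphs C M0"
    unfolding dominated_linear_graphs_def
  proof (intro CollectI conjI allI impI)
    show "a = b" if "(x, a) \<in> G'" "(x, b) \<in> G'" for x a b
      using that unique unfolding G'_def by blast
    show "(x + y, a + b) \<in> G'" if xy: "(x, a) \<in> G'" "(y, b) \<in> G'" for x a y b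
    proof -
      obtain y1 b1 t1 y2 b2 t2 where "(y1, b1) \<in> G" "x = y1 + t1 *\<^sub>R x0" "a = b1 + t1 * c"
        "(y2, b2) \<in> G" "y = y2 + t2 *\<^sub>R x0" "b = b2 + t2 * c"
        using xy unfolding G'_def by blast
      then show ?thesis using inG'[OF dlg_add[of y1 b1 y2 b2], of "t1 + t2"] by (simp add: algebra_simps)
    qed
    show "(r *\<^sub>R x, r * a) \<in> G'" if x: "(x, a) \<in> G'" for x a r
    proof -
      obtain y1 b1 t1 where "(y1, b1) \<in> G" "x = y1 + t1 *\<^sub>R x0" "a = b1 + t1 * c"
        using x unfolding G'_def by blast
      then show ?thesis using inG'[OF dlg_scaleR[of y1 b1 r], of "r * t1"] by (simp add: algebra_simps)
    qed
    show "a \<le> C * norm x" if "(x, a) \<in> G'" for x a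
      using that dlg_bound_translate[OF C _ lower upper] unfolding G'_def by blast
    show "(0, 0) \<in> G'" using inG'[OF dlg_zero, of 0] by simp
    show "M0 \<subseteq> G'" using dlg_extends inG'[of _ _ 0] by auto
  qed
  moreover have "G \<subseteq> G'" using inG'[of _ _ 0] by auto
  moreover have "(x0, c) \<in> G'" using inG'[OF dlg_zero, of 1] by simp
  ultimately show ?thesis using x0 by blast
qed

end

lemma dlg_Union_chain:
  assumes Ch: "Ch \<in> chains (dominated_linear_graphs C M0)" and "Ch \<noteq> {}"
  shows "\<Union>Ch \<in> dominated_linear_graphs C M0"
proof -
  have common_member: "\<exists>G\<in>Ch. p \<in> G \<and> q \<in> G" if "p \<in> \<Union>Ch" "q \<in> \<Union>Ch" for p q
    using that chainsD[OF Ch] by blast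
  have "\<And>G. G \<in> Ch \<Longrightarrow> G \<in> dominated_linear_graphs C M0" using chainsD2[OF Ch] by blast
  note props = dlg_functional[OF this] dlg_add[OF this] dlg_scaleR[OF this] dlg_bound[OF this]
    dlg_zero[OF this] dlg_extends[OF this]
  obtain G0 where "G0 \<in> Ch" using \<open>Ch \<noteq> {}\<close> by blast
  show ?thesis
    unfolding dominated_linear_graphs_def
  proof (intro CollectI conjI allI impI)
    show "a = b" if "(x, a) \<in> \<Union>Ch" "(x, b) \<in> \<Union>Ch" for x a b
      using common_member[OF that] props(1) by blast
    show "(x + y, a + b) \<in> \<Union>Ch" if "(x, a) \<in> \<Union>Ch" "(y, b) \<in> \<Union>Ch" for x a y b
      using common_member[OF that] props(2) by blast
    show "(r *\<^sub>R x, r * a) \<in> \<Union>Ch" if "(x, a) \<in> \<Union>Ch" for x a r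
      using that props(3) by blast
    show "a \<le> C * norm x" if "(x, a) \<in> \<Union>Ch" for x a
      using that props(4) by blast
    show "(0, 0) \<in> \<Union>Ch" using \<open>G0 \<in> Ch\<close> props(5) by blast
    show "M0 \<subseteq> \<Union>Ch" using \<open>G0 \<in> Ch\<close> props(6) by blast
  qed
qed

theorem hahn_banach_graph:
  fixes M0 :: "('a::real_normed_vector \<times> real) set"
  assumes M0: "M0 \<in> dominated_linear_graphs C M0" and C: "0 \<le> C"
  shows "\<exists>F::'a \<Rightarrow>\<^sub>L real. (\<forall>(x, a)\<in>M0. blinfun_apply F x = a) \<and> norm F \<le> C"
proof -
  have "\<exists>U\<in>dominated_linear_graphs C M0. \<forall>X\<in>Ch. X \<subseteq> U"
    if "Ch \<in> chains (dominated_linear_graphs C M0)" for Ch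
  proof (cases "Ch = {}")
    case False
    then show ?thesis using dlg_Union_chain[OF that] by blast
  qed (use M0 in blast)
  from Zorn_Lemma2[OF ballI[OF this]] obtain G where G: "G \<in> dominated_linear_graphs C M0"
    and max: "\<And>X. X \<in> dominated_linear_graphs C M0 \<Longrightarrow> G \<subseteq> X \<Longrightarrow> X = G" by blast
  have "\<exists>a. (x, a) \<in> G" for x
    using dlg_extend[OF G C, of x] max by auto
  then obtain f where fG: "\<And>x. (x, f x) \<in> G" by metis
  have f_eq: "(x, a) \<in> G \<Longrightarrow> f x = a" for x a using dlg_functional[OF G fG] by simp
  have f_norm: "norm (f x) \<le> norm x * C" for x
    using dlg_bound[OF G fG] dlg_bound[OF G dlg_scaleR[OF G fG[of x], of "-1"]]
    by (simp add: abs_le_iff mult.commute)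
  have bl: "bounded_linear f"
    using f_eq[OF dlg_add[OF G fG fG]] f_eq[OF dlg_scaleR[OF G fG]] f_norm
    by (intro bounded_linear_intro) auto
  show ?thesis
  proof (intro exI conjI)
    show "\<forall>(x, a)\<in>M0. blinfun_apply (Blinfun f) x = a"
      using bounded_linear_Blinfun_apply[OF bl] f_eq dlg_extends[OF G] by auto
    show "norm (Blinfun f) \<le> C"
      using norm_blinfun_bound[OF C, of "Blinfun f"] f_norm bounded_linear_Blinfun_apply[OF bl]
      by (simp add: mult.commute)
  qed
qed

lemma graph_on_line_extension_dominated:
  fixes Y :: "'a::real_normed_vector set"
  assumes Y: "subspace Y" and z: "z \<notin> Y" and d: "0 \<le> d" "d \<le> infdist z Y"
  defines "M0 \<equiv> {(y + a *\<^sub>R z, a * d) | y a. y \<in> Y}"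
  shows "M0 \<in> dominated_linear_graphs 1 M0"
proof -
  have unique: "a = b" if "y \<in> Y" "y' \<in> Y" "y + a *\<^sub>R z = y' + b *\<^sub>R z" for y y' a b
  proof (rule ccontr)
    assume "a \<noteq> b"
    moreover have "(a - b) *\<^sub>R z = y' - y" using that(3) by (simp add: algebra_simps)
    moreover have "z = (1 / (a - b)) *\<^sub>R ((a - b) *\<^sub>R z)" using \<open>a \<noteq> b\<close> by simp
    ultimately have "z = (1 / (a - b)) *\<^sub>R (y' - y)" by simp
    moreover have "(1 / (a - b)) *\<^sub>R (y' - y) \<in> Y" using that Y by (simp add: subspace_diff subspace_scale)
    ultimately show False using z by simp
  qed
  have dist_bound: "\<bar>a\<bar> * d \<le> norm (y + a *\<^sub>R z)" if "y \<in> Y" for y a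
  proof (cases "a = 0")
    case False
    have "- ((1/a) *\<^sub>R y) \<in> Y" using that Y by (simp add: subspace_neg subspace_scale)
    then have "infdist z Y \<le> dist z (- ((1/a) *\<^sub>R y))" by (rule infdist_le)
    then have "d \<le> norm (z + (1/a) *\<^sub>R y)" using d(2) by (simp add: dist_norm)
    then have "\<bar>a\<bar> * d \<le> norm (a *\<^sub>R (z + (1/a) *\<^sub>R y))" by (simp add: mult_left_mono)
    also have "a *\<^sub>R (z + (1/a) *\<^sub>R y) = y + a *\<^sub>R z" using False by (simp add: algebra_simps)
    finally show ?thesis .
  qed simp
  show ?thesis unfolding dominated_linear_graphs_def
  proof (intro CollectI conjI allI impI)
    show "p = q" if wpq: "(w, p) \<in> M0" "(w, q) \<in> M0" for w p q
    proof -
      obtain y a y' b where "y \<in> Y" "y' \<in> Y" "w = y + a *\<^sub>R z" "p = a * d" "w = y' + b *\<^sub>R z" "q = b * d"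
        using wpq unfolding M0_def by blast
      then show ?thesis using unique[of y y' a b] by simp
    qed
    show "(w + w', p + q) \<in> M0" if wpq: "(w, p) \<in> M0" "(w', q) \<in> M0" for w p w' q
    proof -
      obtain y a y' b where "y \<in> Y" "y' \<in> Y" "w = y + a *\<^sub>R z" "p = a * d" "w' = y' + b *\<^sub>R z" "q = b * d"
        using wpq unfolding M0_def by blast
      then show ?thesis unfolding M0_def
        by (intro CollectI exI[of _ "y + y'"] exI[of _ "a + b"]) (auto simp: algebra_simps Y subspace_add)
    qed
    show "(r *\<^sub>R w, r * p) \<in> M0" if wp: "(w, p) \<in> M0" for w p r
    proof -
      obtain y a where "y \<in> Y" "w = y + a *\<^sub>R z" "p = a * d" using wp unfolding M0_def by blast
      then show ?thesis unfolding M0_def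
        by (intro CollectI exI[of _ "r *\<^sub>R y"] exI[of _ "r * a"]) (auto simp: algebra_simps Y subspace_scale)
    qed
    show "p \<le> 1 * norm w" if wp: "(w, p) \<in> M0" for w p
    proof -
      obtain y a where y: "y \<in> Y" and "w = y + a *\<^sub>R z" "p = a * d" using wp unfolding M0_def by blast
      then have "p \<le> \<bar>a\<bar> * d" using d(1) by (simp add: mult_right_mono)
      also have "\<dots> \<le> norm w" using dist_bound[OF y] \<open>w = y + a *\<^sub>R z\<close> by simp
      finally show ?thesis by simp
    qed
    show "(0, 0) \<in> M0"
      unfolding M0_def using Y by (intro CollectI exI[of _ 0] exI[of _ "0::real"]) (simp add: subspace_0)
  qed simp
qed

lemma closed_subspace_separation:
  fixes Y :: "'a::real_normed_vector set"
  assumes Y: "subspace Y" "closed Y" and z: "z \<notin> Y"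
  shows "\<exists>F::'a \<Rightarrow>\<^sub>L real. (\<forall>y\<in>Y. blinfun_apply F y = 0) \<and> norm F \<le> 1 \<and>
    blinfun_apply F z = infdist z Y \<and> blinfun_apply F z > 0"
proof -
  have Y0: "0 \<in> Y" using Y(1) by (simp add: subspace_0)
  define d where "d = infdist z Y"
  have d: "d > 0" unfolding d_def using infdist_pos_not_in_closed[OF Y(2) _ z] Y0 by blast
  define M0 where "M0 = {(y + a *\<^sub>R z, a * d) | y a. y \<in> Y}"
  have "M0 \<in> dominated_linear_graphs 1 M0"
    unfolding M0_def using d by (intro graph_on_line_extension_dominated[OF Y(1) z]) (auto simp: d_def)
  from hahn_banach_graph[OF this] obtain F :: "'a \<Rightarrow>\<^sub>L real"
    where F: "\<forall>(w, p)\<in>M0. blinfun_apply F w = p" and "norm F \<le> 1" by auto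
  moreover have "blinfun_apply F y = 0" if "y \<in> Y" for y
  proof -
    have "(y + 0 *\<^sub>R z, 0 * d) \<in> M0" unfolding M0_def using that by blast
    then show ?thesis using F by auto
  qed
  moreover have "blinfun_apply F z = d"
  proof -
    have "(0 + 1 *\<^sub>R z, 1 * d) \<in> M0" unfolding M0_def using Y0 by blast
    then show ?thesis using F by auto
  qed
  ultimately show ?thesis using d unfolding d_def by (intro exI[of _ F]) auto
qed

lemma exists_norming_functional:
  fixes x :: "'a::real_normed_vector"
  shows "\<exists>F::'a \<Rightarrow>\<^sub>L real. norm F \<le> 1 \<and> blinfun_apply F x = norm x"
proof (cases "x = 0")
  case True
  then show ?thesis by (intro exI[of _ 0]) simp
next
  case False
  have "subspace {0::'a}" "closed {0::'a}" by (auto simp: subspace_def)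
  from closed_subspace_separation[OF this, of x] False obtain F :: "'a \<Rightarrow>\<^sub>L real"
    where "norm F \<le> 1" "blinfun_apply F x = infdist x {0}" by auto
  then show ?thesis by (intro exI[of _ F]) (simp add: infdist_singleton dist_norm)
qed

lemma norming_functionals_iff:
  assumes "norm x = 1"
  shows "f \<in> norming_functionals x \<longleftrightarrow> norm f \<le> 1 \<and> blinfun_apply f x = 1"
  using norm_blinfun[of f x] assms unfolding norming_functionals_def by auto

section \<open>Weak convergence and reflexivity\<close>

lemma LIMSEQ_if_abs_diff_le:
  fixes u e :: "nat \<Rightarrow> real"
  assumes "\<And>n. \<bar>u n - a\<bar> \<le> e n" and "e \<longlonglongrightarrow> 0"
  shows "u \<longlonglongrightarrow> a"
proof -
  have "a - e n \<le> u n" "u n \<le> a + e n" for n using assms(1)[of n] by (auto simp: abs_le_iff)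
  moreover have "(\<lambda>n. a - e n) \<longlonglongrightarrow> a" "(\<lambda>n. a + e n) \<longlonglongrightarrow> a"
    using tendsto_diff[OF tendsto_const assms(2)] tendsto_add[OF tendsto_const assms(2)] by simp_all
  ultimately show ?thesis by (intro tendsto_sandwich[of "\<lambda>n. a - e n" u _ "\<lambda>n. a + e n"]) auto
qed

lemma weakly_convergent_to_subseq:
  "weakly_convergent_to xs x \<Longrightarrow> strict_mono r \<Longrightarrow> weakly_convergent_to (xs \<circ> r) x"
  unfolding weakly_convergent_to_def using LIMSEQ_subseq_LIMSEQ by (auto simp: o_def)

lemma weakly_convergent_to_norm_le:
  fixes xs :: "nat \<Rightarrow> 'a::real_normed_vector"
  assumes xs: "weakly_convergent_to xs x" and bound: "\<And>n. norm (xs n) \<le> B"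
  shows "norm x \<le> B"
proof -
  obtain F :: "'a \<Rightarrow>\<^sub>L real" where F: "norm F \<le> 1" "blinfun_apply F x = norm x"
    using exists_norming_functional by blast
  have "(\<lambda>n. blinfun_apply F (xs n)) \<longlonglongrightarrow> blinfun_apply F x"
    using xs unfolding weakly_convergent_to_def by blast
  then have "(\<lambda>n. blinfun_apply F (xs n)) \<longlonglongrightarrow> norm x" using F(2) by simp
  moreover have "blinfun_apply F (xs n) \<le> B" for n
  proof -
    have "blinfun_apply F (xs n) \<le> norm F * norm (xs n)" using norm_blinfun[of F "xs n"] by simp
    also have "\<dots> \<le> 1 * B" using F(1) bound[of n] by (intro mult_mono) auto
    finally show ?thesis by simp
  qed
  ultimately show ?thesis by (intro LIMSEQ_le_const2) auto
qed

definition point_eval :: "'a::real_normed_vector \<Rightarrow> ('a \<Rightarrow>\<^sub>L real) \<Rightarrow>\<^sub>L real" where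
  "point_eval x = Blinfun (\<lambda>f. blinfun_apply f x)"

lemma point_eval_apply [simp]: "blinfun_apply (point_eval x) f = blinfun_apply f x"
  unfolding point_eval_def
  by (subst bounded_linear_Blinfun_apply) (auto intro: blinfun.bounded_linear_left)

lemma norm_point_eval_le: "norm (point_eval x) \<le> norm x"
proof (rule norm_blinfun_bound)
  show "norm (blinfun_apply (point_eval x) f) \<le> norm x * norm f" for f
    using norm_blinfun[of f x] by (simp add: mult.commute)
qed simp

lemma weakly_convergent_to_dual_apply:
  fixes gs :: "nat \<Rightarrow> ('a::real_normed_vector \<Rightarrow>\<^sub>L real)"
  shows "weakly_convergent_to gs g \<Longrightarrow> (\<lambda>n. blinfun_apply (gs n) x) \<longlonglongrightarrow> blinfun_apply g x"
  unfolding weakly_convergent_to_def by (drule spec[of _ "point_eval x"]) simp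

lemma reflexive_space_dual:
  assumes "reflexive_space TYPE('a::banach)"
  shows "reflexive_space TYPE('a \<Rightarrow>\<^sub>L real)"
  unfolding reflexive_space_def
proof
  fix \<Psi> :: "(('a \<Rightarrow>\<^sub>L real) \<Rightarrow>\<^sub>L real) \<Rightarrow>\<^sub>L real"
  define g where "g = blinfun_apply \<Psi> \<circ> point_eval"
  have "bounded_linear (point_eval :: 'a \<Rightarrow> _)"
  proof (rule bounded_linear_intro[where K = 1])
    show "point_eval (x + y) = point_eval x + point_eval y" for x y :: 'a
      by (rule blinfun_eqI) (simp add: blinfun.add_right plus_blinfun.rep_eq)
    show "point_eval (r *\<^sub>R x) = r *\<^sub>R point_eval x" for r x
      by (rule blinfun_eqI) (simp add: blinfun.scaleR_right scaleR_blinfun.rep_eq)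
  qed (simp add: norm_point_eval_le)
  then have g: "bounded_linear g"
    unfolding g_def using bounded_linear_compose[OF blinfun.bounded_linear_right] by (simp add: o_def)
  show "\<exists>x. \<forall>\<Phi>. blinfun_apply \<Psi> \<Phi> = blinfun_apply \<Phi> x"
  proof (intro exI allI)
    fix \<Phi> :: "('a \<Rightarrow>\<^sub>L real) \<Rightarrow>\<^sub>L real"
    obtain z where "\<forall>f. blinfun_apply \<Phi> f = blinfun_apply f z"
      using assms unfolding reflexive_space_def by blast
    then have "\<Phi> = point_eval z" by (intro blinfun_eqI) simp
    then show "blinfun_apply \<Psi> \<Phi> = blinfun_apply \<Phi> (Blinfun g)"
      using bounded_linear_Blinfun_apply[OF g] by (simp add: g_def)
  qed
qed

section \<open>Weak sequential compactness of reflexive spaces\<close>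

lemma subspace_closure_of_Rats_closed:
  fixes A :: "'a::real_normed_vector set"
  assumes zero: "0 \<in> A" and add: "\<And>x y. x \<in> A \<Longrightarrow> y \<in> A \<Longrightarrow> x + y \<in> A"
    and scale: "\<And>x q. x \<in> A \<Longrightarrow> q \<in> \<rat> \<Longrightarrow> q *\<^sub>R x \<in> A"
  shows "subspace (closure A)"
  unfolding subspace_def
proof (intro conjI ballI allI)
  show "0 \<in> closure A" using zero closure_subset by blast
  have "closure A + closure A \<subseteq> closure A"
    using closure_sum[of A A] closure_mono[of "A + A" A] add by (auto simp: set_plus_def)
  then show "x + y \<in> closure A" if "x \<in> closure A" "y \<in> closure A" for x y
    using that by (auto simp: set_plus_def)
  have scale_closure: "q *\<^sub>R x \<in> closure A" if "x \<in> closure A" "q \<in> \<rat>" for x q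
  proof -
    have "q *\<^sub>R x \<in> closure ((*\<^sub>R) q ` A)" using that(1) closure_scaleR[of q A] by blast
    also have "closure ((*\<^sub>R) q ` A) \<subseteq> closure A" using scale that(2) by (intro closure_mono) auto
    finally show ?thesis .
  qed
  show "c *\<^sub>R x \<in> closure A" if "x \<in> closure A" for c x
  proof -
    obtain q where q: "\<And>n. q n \<in> \<rat>" "q \<longlonglongrightarrow> c"
      using Rats_closure_real closure_sequential[of c "\<rat>"] by auto
    have "(\<lambda>n. q n *\<^sub>R x) \<longlonglongrightarrow> c *\<^sub>R x" using q(2) by (intro tendsto_scaleR) auto
    from closed_sequentially[OF closed_closure scale_closure[OF that q(1)] this] show ?thesis .
  qed
qed

lemma subspace_closure:
  fixes A :: "'a::real_normed_vector set"
  shows "subspace A \<Longrightarrow> subspace (closure A)"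
  by (rule subspace_closure_of_Rats_closed) (auto simp: subspace_0 subspace_add subspace_scale)

definition rat_span :: "'a::real_normed_vector set \<Rightarrow> 'a set" where
  "rat_span S = (\<lambda>l. \<Sum>(q, s)\<leftarrow>l. of_rat q *\<^sub>R s) ` lists (UNIV \<times> S)"

lemma countable_rat_span: "countable S \<Longrightarrow> countable (rat_span S)"
  unfolding rat_span_def by (intro countable_image countable_lists) auto

lemma zero_in_rat_span: "0 \<in> rat_span S"
  unfolding rat_span_def by (rule image_eqI[of _ _ "[]"]) auto

lemma rat_span_base: "s \<in> S \<Longrightarrow> s \<in> rat_span S"
  unfolding rat_span_def by (rule image_eqI[of _ _ "[(1, s)]"]) auto

lemma subspace_closure_rat_span: "subspace (closure (rat_span S))"
proof (rule subspace_closure_of_Rats_closed)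
  show "0 \<in> rat_span S" by (rule zero_in_rat_span)
  show "x + y \<in> rat_span S" if xy: "x \<in> rat_span S" "y \<in> rat_span S" for x y
  proof -
    obtain l1 l2 where "l1 \<in> lists (UNIV \<times> S)" "x = (\<Sum>(q, s)\<leftarrow>l1. of_rat q *\<^sub>R s)"
      "l2 \<in> lists (UNIV \<times> S)" "y = (\<Sum>(q, s)\<leftarrow>l2. of_rat q *\<^sub>R s)"
      using xy unfolding rat_span_def by blast
    then show ?thesis unfolding rat_span_def by (intro image_eqI[of _ _ "l1 @ l2"]) auto
  qed
  show "r *\<^sub>R x \<in> rat_span S" if x: "x \<in> rat_span S" and "r \<in> \<rat>" for x r
  proof -
    obtain q0 where r: "r = of_rat q0" using \<open>r \<in> \<rat>\<close> by (auto elim: Rats_cases)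
    obtain l where l: "l \<in> lists (UNIV \<times> S)" "x = (\<Sum>(q, s)\<leftarrow>l. of_rat q *\<^sub>R s)"
      using x unfolding rat_span_def by blast
    have "r *\<^sub>R x = (\<Sum>(q, s)\<leftarrow>map (\<lambda>(q, s). (q0 * q, s)) l. of_rat q *\<^sub>R s)"
      unfolding l(2) r by (induction l) (auto simp: scaleR_add_right of_rat_mult)
    moreover have "map (\<lambda>(q, s). (q0 * q, s)) l \<in> lists (UNIV \<times> S)" using l(1) by auto
    ultimately show ?thesis unfolding rat_span_def by blast
  qed
qed

lemma span_blinfun_tendsto:
  fixes c :: "nat \<Rightarrow> ('a::real_normed_vector \<Rightarrow>\<^sub>L real)"
  assumes "\<And>i. (\<lambda>n. blinfun_apply (c i) (xs n)) \<longlonglongrightarrow> blinfun_apply (c i) x"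
    and "h \<in> span (range c)"
  shows "(\<lambda>n. blinfun_apply h (xs n)) \<longlonglongrightarrow> blinfun_apply h x"
proof -
  define T where "T = {h :: 'a \<Rightarrow>\<^sub>L real. (\<lambda>n. blinfun_apply h (xs n)) \<longlonglongrightarrow> blinfun_apply h x}"
  have "subspace T"
    unfolding subspace_def T_def
    by (auto simp: plus_blinfun.rep_eq scaleR_blinfun.rep_eq intro: tendsto_add tendsto_mult_left)
  then have "span (range c) \<subseteq> T" using assms(1) by (intro span_minimal) (auto simp: T_def)
  then show ?thesis using assms(2) unfolding T_def by blast
qed

lemma span_blinfun_convergent:
  fixes c :: "nat \<Rightarrow> ('a::real_normed_vector \<Rightarrow>\<^sub>L real)"
  assumes "\<And>i. convergent (\<lambda>n. blinfun_apply (c i) (xs n))"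
    and "h \<in> span (range c)"
  shows "convergent (\<lambda>n. blinfun_apply h (xs n))"
proof -
  define T where "T = {h :: 'a \<Rightarrow>\<^sub>L real. convergent (\<lambda>n. blinfun_apply h (xs n))}"
  have "subspace T"
    unfolding subspace_def T_def
    by (auto simp: plus_blinfun.rep_eq scaleR_blinfun.rep_eq convergent_const
        intro: convergent_add convergent_mult convergent_const)
  then have "span (range c) \<subseteq> T" using assms(1) by (intro span_minimal) (auto simp: T_def)
  then show ?thesis using assms(2) unfolding T_def by blast
qed

text \<open>On bounded subsets of \<open>Y\<close>, weak convergence can then be tested with the functionals
  \<open>c i\<close> alone (lemmas \<open>determining_on_weakly_convergent\<close> and \<open>determining_on_weakly_Cauchy\<close>).\<close>

definition determining_on :: "'a::real_normed_vector set \<Rightarrow> (nat \<Rightarrow> ('a \<Rightarrow>\<^sub>L real)) \<Rightarrow> bool" where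
  "determining_on Y c \<longleftrightarrow> (\<forall>f \<delta>. \<delta> > 0 \<longrightarrow>
     (\<exists>h\<in>span (range c). \<exists>q. (\<forall>y\<in>Y. blinfun_apply q y = 0) \<and> norm (f - h - q) < \<delta>))"

lemma mem_closed_subspace_if_annihilated:
  fixes Y :: "'a::real_normed_vector set"
  assumes "subspace Y" "closed Y"
    and "\<And>q::'a \<Rightarrow>\<^sub>L real. (\<forall>y\<in>Y. blinfun_apply q y = 0) \<Longrightarrow> blinfun_apply q z = 0"
  shows "z \<in> Y"
  using closed_subspace_separation[OF assms(1,2), of z] assms(3) by force

lemma zero_if_norming_functionals_vanish:
  fixes c :: "nat \<Rightarrow> ('a::real_normed_vector \<Rightarrow>\<^sub>L real)"
  assumes c: "\<And>i. norm (c i) \<le> 1" "\<And>i. blinfun_apply (c i) (d i) = norm (d i)"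
    and z: "z \<in> closure (range d)" and vanish: "\<And>i. blinfun_apply (c i) z = 0"
  shows "z = 0"
proof (rule ccontr)
  assume "z \<noteq> 0"
  then have "norm z / 2 > 0" by simp
  with z obtain i where i: "dist (d i) z < norm z / 2"
    unfolding closure_approachable by blast
  have "norm (d i) = blinfun_apply (c i) (d i - z)" using c(2) vanish by (simp add: blinfun.diff_right)
  also have "\<dots> \<le> norm (c i) * norm (d i - z)" using norm_blinfun[of "c i" "d i - z"] by simp
  also have "\<dots> \<le> norm (d i - z)" using c(1) by (simp add: mult_left_le_one_le)
  finally have "norm (d i) \<le> norm (d i - z)" .
  moreover have "norm z \<le> norm (d i) + norm (d i - z)" using norm_triangle_ineq4[of "d i" "d i - z"] by simp
  ultimately show False using i by (simp add: dist_norm)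
qed

lemma exists_determining_sequence:
  fixes S :: "'a::banach set"
  assumes refl: "reflexive_space TYPE('a)" and "countable S"
  shows "\<exists>c Y. S \<subseteq> Y \<and> determining_on Y c"
proof -
  define Y where "Y = closure (rat_span S)"
  define d where "d = from_nat_into (rat_span S)"
  have d: "range d = rat_span S"
    unfolding d_def using zero_in_rat_span countable_rat_span[OF \<open>countable S\<close>]
    by (intro range_from_nat_into) auto
  have "\<forall>i. \<exists>F::'a \<Rightarrow>\<^sub>L real. norm F \<le> 1 \<and> blinfun_apply F (d i) = norm (d i)"
    using exists_norming_functional by blast
  then obtain c :: "nat \<Rightarrow> ('a \<Rightarrow>\<^sub>L real)"
    where c: "\<And>i. norm (c i) \<le> 1" "\<And>i. blinfun_apply (c i) (d i) = norm (d i)"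
    by metis
  define Yp where "Yp = {q :: 'a \<Rightarrow>\<^sub>L real. \<forall>y\<in>Y. blinfun_apply q y = 0}"
  define M where "M = {h + q | h q. h \<in> span (range c) \<and> q \<in> Yp}"
  have "subspace Yp"
    unfolding subspace_def Yp_def by (auto simp: plus_blinfun.rep_eq scaleR_blinfun.rep_eq)
  then have "subspace M"
    unfolding M_def by (intro subspace_sums) auto
  have "f \<in> closure M" for f
  proof (rule ccontr)
    assume "f \<notin> closure M"
    then obtain \<Phi> :: "('a \<Rightarrow>\<^sub>L real) \<Rightarrow>\<^sub>L real"
      where \<Phi>: "\<forall>g\<in>closure M. blinfun_apply \<Phi> g = 0" and "blinfun_apply \<Phi> f > 0"
      using closed_subspace_separation[OF subspace_closure[OF \<open>subspace M\<close>] closed_closure] by blast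
    txt \<open>Since \<open>\<Phi>\<close> kills the annihilator of
      \<open>Y\<close>, \<open>z \<in> Y\<close>; since it kills every \<open>c i\<close>, which norm the dense sequence \<open>d\<close>, \<open>z = 0\<close>.\<close>
    obtain z where z: "\<And>g. blinfun_apply \<Phi> g = blinfun_apply g z"
      using refl unfolding reflexive_space_def by blast
    have M_z: "blinfun_apply g z = 0" if "g \<in> M" for g
      using \<Phi> z that closure_subset by force
    have "blinfun_apply q z = 0" if "q \<in> Yp" for q
    proof -
      have "0 + q \<in> M" unfolding M_def using that span_zero by blast
      then show ?thesis using M_z by simp
    qed
    then have "z \<in> Y"
      unfolding Y_def Yp_def
      by (intro mem_closed_subspace_if_annihilated subspace_closure_rat_span closed_closure) auto
    moreover have "blinfun_apply (c i) z = 0" for i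
    proof -
      have "c i \<in> span (range c)" "0 \<in> Yp" by (auto simp: span_base Yp_def)
      then have "c i + 0 \<in> M" unfolding M_def by blast
      then show ?thesis using M_z by simp
    qed
    ultimately have "z = 0"
      using zero_if_norming_functionals_vanish[of c d z] c d unfolding Y_def by auto
    then show False using \<open>blinfun_apply \<Phi> f > 0\<close> z by simp
  qed
  then have "determining_on Y c"
    unfolding determining_on_def M_def Yp_def closure_approachable dist_norm
    by (fastforce simp: norm_minus_commute diff_diff_eq)
  moreover have "S \<subseteq> Y" unfolding Y_def using rat_span_base closure_subset by blast
  ultimately show ?thesis by blast
qed

lemma determining_on_estimate:
  assumes "determining_on Y c" "\<delta> > 0"
  obtains h where "h \<in> span (range c)"
    and "\<And>u v. u \<in> Y \<Longrightarrow> v \<in> Y \<Longrightarrow>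
      \<bar>blinfun_apply f u - blinfun_apply f v\<bar> \<le> \<bar>blinfun_apply h u - blinfun_apply h v\<bar> + \<delta> * norm (u - v)"
proof -
  obtain h q where h: "h \<in> span (range c)" and q: "\<forall>y\<in>Y. blinfun_apply q y = 0"
    and small: "norm (f - h - q) < \<delta>"
    using assms unfolding determining_on_def by blast
  have "\<bar>blinfun_apply f u - blinfun_apply f v\<bar> \<le> \<bar>blinfun_apply h u - blinfun_apply h v\<bar> + \<delta> * norm (u - v)"
    if "u \<in> Y" "v \<in> Y" for u v
  proof -
    have "blinfun_apply f u - blinfun_apply f v =
        blinfun_apply (f - h - q) (u - v) + (blinfun_apply h u - blinfun_apply h v)"
      using q that by (simp add: blinfun.diff_left blinfun.diff_right)
    moreover have "\<bar>blinfun_apply (f - h - q) (u - v)\<bar> \<le> \<delta> * norm (u - v)"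
      using norm_blinfun[of "f - h - q" "u - v"] small
      by (simp add: order_trans[OF _ mult_right_mono[OF less_imp_le]])
    ultimately show ?thesis by linarith
  qed
  with h that show ?thesis by blast
qed

lemma determining_on_weakly_convergent:
  assumes c: "determining_on Y c" and Y: "\<And>n. xs n \<in> Y" "x \<in> Y"
    and bound: "\<And>n. norm (xs n) \<le> B"
    and conv: "\<And>i. (\<lambda>n. blinfun_apply (c i) (xs n)) \<longlonglongrightarrow> blinfun_apply (c i) x"
  shows "weakly_convergent_to xs x"
  unfolding weakly_convergent_to_def
proof (intro allI tendstoI)
  fix f :: "'a \<Rightarrow>\<^sub>L real" and r :: real
  assume "r > 0"
  define K where "K = B + norm x + 1"
  define \<delta> where "\<delta> = r / 2 / K"
  have "0 \<le> B" using bound[of 0] norm_ge_zero order_trans by blast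
  then have "K > 0" unfolding K_def by (simp add: add_nonneg_pos)
  then have \<delta>: "\<delta> > 0" "\<delta> * K = r / 2"
    using \<open>r > 0\<close> by (simp_all add: \<delta>_def)
  obtain h where h: "h \<in> span (range c)" and est: "\<And>u v. u \<in> Y \<Longrightarrow> v \<in> Y \<Longrightarrow>
      \<bar>blinfun_apply f u - blinfun_apply f v\<bar> \<le> \<bar>blinfun_apply h u - blinfun_apply h v\<bar> + \<delta> * norm (u - v)"
    using determining_on_estimate[OF c \<delta>(1)] by blast
  have "(\<lambda>n. blinfun_apply h (xs n)) \<longlonglongrightarrow> blinfun_apply h x" by (rule span_blinfun_tendsto[OF conv h])
  then have "eventually (\<lambda>n. dist (blinfun_apply h (xs n)) (blinfun_apply h x) < r / 2) sequentially"
    using \<open>r > 0\<close> by (intro tendstoD) auto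
  then show "eventually (\<lambda>n. dist (blinfun_apply f (xs n)) (blinfun_apply f x) < r) sequentially"
  proof (rule eventually_mono)
    fix n assume "dist (blinfun_apply h (xs n)) (blinfun_apply h x) < r / 2"
    moreover have "\<delta> * norm (xs n - x) \<le> \<delta> * K"
      using \<delta>(1) bound[of n] norm_triangle_ineq4[of "xs n" x] unfolding K_def by (intro mult_left_mono) auto
    ultimately show "dist (blinfun_apply f (xs n)) (blinfun_apply f x) < r"
      using est[OF Y(1)[of n] Y(2)] \<delta>(2) unfolding dist_real_def by linarith
  qed
qed

lemma determining_on_weakly_Cauchy:
  fixes f :: "'a::real_normed_vector \<Rightarrow>\<^sub>L real"
  assumes c: "determining_on Y c" and Y: "\<And>n. xs n \<in> Y"
    and bound: "\<And>n. norm (xs n) \<le> B"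
    and conv: "\<And>i. convergent (\<lambda>n. blinfun_apply (c i) (xs n))"
  shows "convergent (\<lambda>n. blinfun_apply f (xs n))"
  unfolding Cauchy_convergent_iff[symmetric]
proof (rule metric_CauchyI)
  fix r :: real
  assume "r > 0"
  define K where "K = 2 * B + 1"
  define \<delta> where "\<delta> = r / 2 / K"
  have "0 \<le> B" using bound[of 0] norm_ge_zero order_trans by blast
  then have "K > 0" unfolding K_def by simp
  then have \<delta>: "\<delta> > 0" "\<delta> * K = r / 2"
    using \<open>r > 0\<close> by (simp_all add: \<delta>_def)
  obtain h where h: "h \<in> span (range c)" and est: "\<And>u v. u \<in> Y \<Longrightarrow> v \<in> Y \<Longrightarrow>
      \<bar>blinfun_apply f u - blinfun_apply f v\<bar> \<le> \<bar>blinfun_apply h u - blinfun_apply h v\<bar> + \<delta> * norm (u - v)"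
    using determining_on_estimate[OF c \<delta>(1)] by blast
  have "Cauchy (\<lambda>n. blinfun_apply h (xs n))"
    using span_blinfun_convergent[OF conv h] Cauchy_convergent_iff by blast
  then obtain M where M: "\<And>m n. M \<le> m \<Longrightarrow> M \<le> n \<Longrightarrow>
      dist (blinfun_apply h (xs m)) (blinfun_apply h (xs n)) < r / 2"
    using \<open>r > 0\<close> metric_CauchyD[of _ "r / 2"] by (metis half_gt_zero)
  show "\<exists>M. \<forall>m\<ge>M. \<forall>n\<ge>M. dist (blinfun_apply f (xs m)) (blinfun_apply f (xs n)) < r"
  proof (intro exI allI impI)
    fix m n assume mn: "M \<le> m" "M \<le> n"
    have "\<delta> * norm (xs m - xs n) \<le> \<delta> * K"
      using \<delta>(1) bound[of m] bound[of n] norm_triangle_ineq4[of "xs m" "xs n"] unfolding K_def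
      by (intro mult_left_mono) auto
    then show "dist (blinfun_apply f (xs m)) (blinfun_apply f (xs n)) < r"
      using est[OF Y Y, of m n] M[OF mn] \<delta>(2) by (simp add: dist_real_def)
  qed
qed

lemma reflexive_space_weak_limit_exists:
  fixes xs :: "nat \<Rightarrow> 'a::banach"
  assumes refl: "reflexive_space TYPE('a)" and bound: "\<And>n. norm (xs n) \<le> B"
    and conv: "\<And>f::'a \<Rightarrow>\<^sub>L real. convergent (\<lambda>n. blinfun_apply f (xs n))"
  shows "\<exists>x. weakly_convergent_to xs x"
proof -
  define L where "L f = lim (\<lambda>n. blinfun_apply f (xs n))" for f :: "'a \<Rightarrow>\<^sub>L real"
  have L: "(\<lambda>n. blinfun_apply f (xs n)) \<longlonglongrightarrow> L f" for f :: "'a \<Rightarrow>\<^sub>L real"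
    unfolding L_def using conv[of f] by (simp add: convergent_LIMSEQ_iff)
  have "bounded_linear L"
  proof (rule bounded_linear_intro[where K = B])
    show "L (f + g) = L f + L g" for f g :: "'a \<Rightarrow>\<^sub>L real"
      using tendsto_add[OF L[of f] L[of g]] L[of "f + g"] by (simp add: plus_blinfun.rep_eq LIMSEQ_unique)
    show "L (r *\<^sub>R f) = r *\<^sub>R L f" for r and f :: "'a \<Rightarrow>\<^sub>L real"
      using tendsto_mult_left[OF L[of f], of r] L[of "r *\<^sub>R f"] by (simp add: scaleR_blinfun.rep_eq LIMSEQ_unique)
    show "norm (L f) \<le> norm f * B" for f :: "'a \<Rightarrow>\<^sub>L real"
    proof (rule LIMSEQ_le_const2[OF tendsto_norm[OF L[of f]]])
      show "\<exists>N. \<forall>n\<ge>N. norm (blinfun_apply f (xs n)) \<le> norm f * B"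
        using norm_blinfun[of f] bound by (meson mult_left_mono norm_ge_zero order_trans)
    qed
  qed
  moreover obtain x where "\<forall>f. blinfun_apply (Blinfun L) f = blinfun_apply f x"
    using refl unfolding reflexive_space_def by blast
  ultimately have "weakly_convergent_to xs x"
    unfolding weakly_convergent_to_def using L by (simp add: bounded_linear_Blinfun_apply)
  then show ?thesis by blast
qed

lemma reflexive_space_weakly_convergent_subseq:
  fixes xs :: "nat \<Rightarrow> 'a::banach"
  assumes refl: "reflexive_space TYPE('a)" and bound: "\<And>n. norm (xs n) \<le> B"
  shows "\<exists>r x. strict_mono r \<and> weakly_convergent_to (xs \<circ> r) x"
proof -
  have "countable (range xs)" by simp
  from exists_determining_sequence[OF refl this]
  obtain c Y where Y: "range xs \<subseteq> Y" and c: "determining_on Y c" by blast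
  interpret subseqs "\<lambda>i r. convergent (\<lambda>n. blinfun_apply (c i) (xs (r n)))"
  proof
    fix i and s :: "nat \<Rightarrow> nat"
    have "norm (blinfun_apply (c i) (xs (s n))) \<le> norm (c i) * B" for n
      using norm_blinfun[of "c i" "xs (s n)"] bound[of "s n"]
      by (meson mult_left_mono norm_ge_zero order_trans)
    then have "bounded (range (\<lambda>n. blinfun_apply (c i) (xs (s n))))"
      unfolding bounded_iff by blast
    from bounded_imp_convergent_subsequence[OF this] obtain l r'
      where "strict_mono r'" "((\<lambda>n. blinfun_apply (c i) (xs (s n))) \<circ> r') \<longlonglongrightarrow> l" by blast
    then show "\<exists>r'. strict_mono r' \<and> convergent (\<lambda>n. blinfun_apply (c i) (xs ((s \<circ> r') n)))"
      by (intro exI[of _ r']) (auto simp: o_def convergent_def)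
  qed
  have "convergent (\<lambda>n. blinfun_apply (c i) (xs (diagseq n)))" for i
  proof -
    have "convergent (\<lambda>n. blinfun_apply (c i) (xs ((diagseq \<circ> (+) (Suc i)) n)))"
    proof (rule diagseq_holds)
      fix r s n assume "strict_mono (r :: nat \<Rightarrow> nat)" "convergent (\<lambda>m. blinfun_apply (c n) (xs (s m)))"
      from convergent_subseq_convergent[OF this(2,1)]
      show "convergent (\<lambda>m. blinfun_apply (c n) (xs ((s \<circ> r) m)))" by (simp add: o_def)
    qed
    then show ?thesis
      using convergent_ignore_initial_segment[of "\<lambda>n. blinfun_apply (c i) (xs (diagseq n))" "Suc i"]
      by (simp add: o_def add.commute)
  qed
  note conv = this
  have "convergent (\<lambda>n. blinfun_apply f ((xs \<circ> diagseq) n))" for f :: "'a \<Rightarrow>\<^sub>L real"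
  proof (rule determining_on_weakly_Cauchy[OF c])
    show "(xs \<circ> diagseq) n \<in> Y" for n using Y by auto
    show "norm ((xs \<circ> diagseq) n) \<le> B" for n using bound by simp
    show "convergent (\<lambda>n. blinfun_apply (c i) ((xs \<circ> diagseq) n))" for i using conv by (simp add: o_def)
  qed
  then obtain x where "weakly_convergent_to (xs \<circ> diagseq) x"
    using reflexive_space_weak_limit_exists[OF refl, of "xs \<circ> diagseq" B] bound by auto
  then show ?thesis using subseq_diagseq by blast
qed

lemma reflexive_space_weakly_convergent_subseq_pair:
  fixes xs :: "nat \<Rightarrow> 'a::banach" and fs :: "nat \<Rightarrow> ('a \<Rightarrow>\<^sub>L real)"
  assumes refl: "reflexive_space TYPE('a)"
    and "\<And>n. norm (xs n) \<le> B" "\<And>n. norm (fs n) \<le> B'"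
  obtains r x f where "strict_mono r" "weakly_convergent_to (xs \<circ> r) x" "weakly_convergent_to (fs \<circ> r) f"
proof -
  obtain r1 x where r1: "strict_mono r1" and x: "weakly_convergent_to (xs \<circ> r1) x"
    using reflexive_space_weakly_convergent_subseq[OF refl] assms(2) by blast
  obtain r2 f where r2: "strict_mono r2" and f: "weakly_convergent_to (fs \<circ> r1 \<circ> r2) f"
    using reflexive_space_weakly_convergent_subseq[OF reflexive_space_dual[OF refl], of "fs \<circ> r1" B']
      assms(3) by auto
  show ?thesis
  proof
    show "strict_mono (r1 \<circ> r2)" using r1 r2 by (rule strict_mono_o)
    show "weakly_convergent_to (xs \<circ> (r1 \<circ> r2)) x"
      using weakly_convergent_to_subseq[OF x r2] by (simp add: o_assoc)
    show "weakly_convergent_to (fs \<circ> (r1 \<circ> r2)) f" using f by (simp add: o_assoc)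
  qed
qed

lemma reflexive_space_weak_diagonal:
  fixes xs :: "nat \<Rightarrow> nat \<Rightarrow> 'a::banach"
  assumes refl: "reflexive_space TYPE('a)" and bound: "\<And>k n. norm (xs k n) \<le> B"
    and xs: "\<And>k. weakly_convergent_to (xs k) (x k)" and x: "weakly_convergent_to x y"
  shows "\<exists>N. \<forall>m. (\<forall>k. N k \<le> m k) \<longrightarrow> weakly_convergent_to (\<lambda>k. xs k (m k)) y"
proof -
  obtain c Y where Y: "range (case_prod xs) \<union> range x \<union> {y} \<subseteq> Y" and c: "determining_on Y c"
    using exists_determining_sequence[OF refl, of "range (case_prod xs) \<union> range x \<union> {y}"] by auto
  have "\<exists>N. \<forall>n\<ge>N. \<forall>i\<le>k. \<bar>blinfun_apply (c i) (xs k n) - blinfun_apply (c i) (x k)\<bar> < 1 / Suc k" for k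
  proof -
    have "\<forall>\<^sub>F n in sequentially. \<forall>i\<in>{..k}. dist (blinfun_apply (c i) (xs k n)) (blinfun_apply (c i) (x k)) < 1 / Suc k"
      using xs[of k] unfolding weakly_convergent_to_def
      by (intro eventually_ball_finite ballI tendstoD) auto
    then show ?thesis unfolding eventually_sequentially dist_real_def by auto
  qed
  then obtain N where N: "\<And>k n i. N k \<le> n \<Longrightarrow> i \<le> k \<Longrightarrow>
      \<bar>blinfun_apply (c i) (xs k n) - blinfun_apply (c i) (x k)\<bar> < 1 / Suc k"
    by metis
  have "weakly_convergent_to (\<lambda>k. xs k (m k)) y" if m: "\<forall>k. N k \<le> m k" for m
  proof (rule determining_on_weakly_convergent[OF c _ _ bound])
    show "xs k (m k) \<in> Y" for k using Y by auto
    show "y \<in> Y" using Y by auto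
    show "(\<lambda>k. blinfun_apply (c i) (xs k (m k))) \<longlonglongrightarrow> blinfun_apply (c i) y" for i
    proof -
      have "(\<lambda>k. blinfun_apply (c i) (xs k (m k)) - blinfun_apply (c i) (x k)) \<longlonglongrightarrow> 0"
      proof (rule Lim_null_comparison[OF _ LIMSEQ_inverse_real_of_nat])
        show "\<forall>\<^sub>F k in sequentially.
            norm (blinfun_apply (c i) (xs k (m k)) - blinfun_apply (c i) (x k)) \<le> inverse (real (Suc k))"
          unfolding eventually_sequentially
        proof (intro exI allI impI)
          fix k assume "i \<le> k"
          then show "norm (blinfun_apply (c i) (xs k (m k)) - blinfun_apply (c i) (x k)) \<le> inverse (real (Suc k))"
            using N[of k "m k" i] m by (simp add: inverse_eq_divide)
        qed
      qed
      moreover have "(\<lambda>k. blinfun_apply (c i) (x k)) \<longlonglongrightarrow> blinfun_apply (c i) y"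
        using x unfolding weakly_convergent_to_def by blast
      ultimately show ?thesis using tendsto_add by fastforce
    qed
  qed
  then show ?thesis by blast
qed

section \<open>From a D-point to sequential super \<Delta>-points\<close>

lemma not_kadets_klee_if_seq_super_Delta_point:
  fixes x :: "'a::real_normed_vector"
  assumes "is_seq_super_Delta_point x"
  shows "\<not> kadets_klee TYPE('a)"
proof
  assume "kadets_klee TYPE('a)"
  moreover obtain xs where "\<forall>n. xs n \<in> unit_sphere" "weakly_convergent_to xs x"
    and far: "(\<lambda>n. norm (x - xs n)) \<longlonglongrightarrow> 2" and "x \<in> unit_sphere"
    using assms unfolding is_seq_super_Delta_point_def by blast
  ultimately have "(\<lambda>n. norm (x - xs n)) \<longlonglongrightarrow> 0" unfolding kadets_klee_def by blast
  with far show False using LIMSEQ_unique by fastforce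
qed

lemma seq_super_Delta_point_if_antipodal:
  fixes x :: "'a::real_normed_vector" and fs :: "nat \<Rightarrow> ('a \<Rightarrow>\<^sub>L real)"
  assumes x: "norm x = 1" and xs: "\<And>k. norm (xs k) \<le> 1" "\<And>k. xs k \<noteq> 0" "weakly_convergent_to xs x"
    and fs: "\<And>k. norm (fs k) \<le> 1"
    and at_x: "(\<lambda>k. blinfun_apply (fs k) x) \<longlonglongrightarrow> 1"
    and at_xs: "(\<lambda>k. blinfun_apply (fs k) (xs k)) \<longlonglongrightarrow> -1"
  shows "is_seq_super_Delta_point x"
proof -
  have apply_le: "blinfun_apply (fs k) v \<le> norm v" for k v
  proof -
    have "blinfun_apply (fs k) v \<le> norm (fs k) * norm v" using norm_blinfun[of "fs k" v] by simp
    also have "\<dots> \<le> norm v" using fs[of k] by (simp add: mult_left_le_one_le)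
    finally show ?thesis .
  qed
  have "(\<lambda>k. norm (xs k)) \<longlonglongrightarrow> 1"
  proof (rule tendsto_sandwich[of "\<lambda>k. - blinfun_apply (fs k) (xs k)" _ _ "\<lambda>k. 1"])
    show "\<forall>\<^sub>F k in sequentially. - blinfun_apply (fs k) (xs k) \<le> norm (xs k)"
      using apply_le[of _ "- xs _"] by (simp add: blinfun.minus_right)
    show "(\<lambda>k. - blinfun_apply (fs k) (xs k)) \<longlonglongrightarrow> 1" using tendsto_minus[OF at_xs] by simp
  qed (use xs(1) in auto)
  define u where "u k = (1 / norm (xs k)) *\<^sub>R xs k" for k
  have u: "norm (u k) = 1" for k unfolding u_def using xs(2) by simp
  have u_apply: "blinfun_apply f (u k) = blinfun_apply f (xs k) / norm (xs k)" for f :: "'a \<Rightarrow>\<^sub>L real" and k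
    unfolding u_def by (simp add: blinfun.scaleR_right)
  have "weakly_convergent_to u x"
    unfolding weakly_convergent_to_def u_apply
  proof
    fix f :: "'a \<Rightarrow>\<^sub>L real"
    have "(\<lambda>k. blinfun_apply f (xs k) / norm (xs k)) \<longlonglongrightarrow> blinfun_apply f x / 1"
      using xs(3) \<open>(\<lambda>k. norm (xs k)) \<longlonglongrightarrow> 1\<close> unfolding weakly_convergent_to_def
      by (intro tendsto_divide) auto
    then show "(\<lambda>k. blinfun_apply f (xs k) / norm (xs k)) \<longlonglongrightarrow> blinfun_apply f x" by simp
  qed
  moreover have "(\<lambda>k. norm (x - u k)) \<longlonglongrightarrow> 2"
  proof (rule tendsto_sandwich[of "\<lambda>k. blinfun_apply (fs k) x - blinfun_apply (fs k) (u k)" _ _ "\<lambda>k. 2"])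
    show "\<forall>\<^sub>F k in sequentially. blinfun_apply (fs k) x - blinfun_apply (fs k) (u k) \<le> norm (x - u k)"
      using apply_le[of _ "x - u _"] by (simp add: blinfun.diff_right)
    show "\<forall>\<^sub>F k in sequentially. norm (x - u k) \<le> 2"
      using norm_triangle_ineq4[of x "u _"] x u by simp
    have "(\<lambda>k. blinfun_apply (fs k) (u k)) \<longlonglongrightarrow> -1 / 1"
      unfolding u_apply by (intro tendsto_divide at_xs \<open>(\<lambda>k. norm (xs k)) \<longlonglongrightarrow> 1\<close>) simp
    then show "(\<lambda>k. blinfun_apply (fs k) x - blinfun_apply (fs k) (u k)) \<longlonglongrightarrow> 2"
      using tendsto_diff[OF at_x] by fastforce
  qed simp
  ultimately show ?thesis
    unfolding is_seq_super_Delta_point_def unit_sphere_def using x u by blast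
qed

lemma D_point_slice_witness:
  fixes x0 :: "'a::real_normed_vector"
  assumes D: "is_D_point x0" and \<phi>: "\<phi> \<in> norming_functionals x0" and "0 < \<epsilon>" "\<epsilon> < 2"
  obtains y g where "norm y \<le> 1" "blinfun_apply \<phi> y > 1 - \<epsilon>"
    and "norm g = 1" "blinfun_apply g x0 > 1 - \<epsilon>" "blinfun_apply g y < -1 + \<epsilon>"
proof -
  have x0: "norm x0 = 1" using D unfolding is_D_point_def unit_sphere_def by simp
  have \<phi>x0: "norm \<phi> = 1" "blinfun_apply \<phi> x0 = 1" using \<phi> unfolding norming_functionals_def by auto
  have ne: "x0 \<in> slice \<phi> \<epsilon>" unfolding slice_def unit_ball_def using x0 \<phi>x0 \<open>0 < \<epsilon>\<close> by simp
  have bdd: "bdd_above ((\<lambda>y. norm (x0 - y)) ` slice \<phi> \<epsilon>)"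
  proof (rule bdd_aboveI[where M = 2])
    fix t assume "t \<in> (\<lambda>y. norm (x0 - y)) ` slice \<phi> \<epsilon>"
    then obtain y where "norm y \<le> 1" "t = norm (x0 - y)" unfolding slice_def unit_ball_def by blast
    then show "t \<le> 2" using norm_triangle_ineq4[of x0 y] x0 by linarith
  qed
  have "(SUP y\<in>slice \<phi> \<epsilon>. norm (x0 - y)) > 2 - \<epsilon>"
    using D \<phi> \<open>0 < \<epsilon>\<close> unfolding is_D_point_def by simp
  then have "\<exists>y\<in>slice \<phi> \<epsilon>. 2 - \<epsilon> < norm (x0 - y)"
    using less_cSUP_iff[of "slice \<phi> \<epsilon>" "\<lambda>y. norm (x0 - y)"] ne bdd by blast
  then obtain y where y: "y \<in> slice \<phi> \<epsilon>" and far: "norm (x0 - y) > 2 - \<epsilon>" by blast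
  obtain g :: "'a \<Rightarrow>\<^sub>L real" where g: "norm g \<le> 1" "blinfun_apply g (x0 - y) = norm (x0 - y)"
    using exists_norming_functional by blast
  have y1: "norm y \<le> 1" using y unfolding slice_def unit_ball_def by simp
  have bound: "\<bar>blinfun_apply g v\<bar> \<le> 1" if "norm v \<le> 1" for v
    using norm_blinfun[of g v] g(1) that by (simp add: mult_le_one order_trans)
  have gx0: "\<bar>blinfun_apply g x0\<bar> \<le> 1" and gy: "\<bar>blinfun_apply g y\<bar> \<le> 1"
    using bound x0 y1 by auto
  have diff: "blinfun_apply g x0 - blinfun_apply g y > 2 - \<epsilon>"
    using g(2) far by (simp add: blinfun.diff_right)
  have "norm (x0 - y) \<le> norm g * norm (x0 - y)" using norm_blinfun[of g "x0 - y"] g(2) by simp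
  moreover have "norm (x0 - y) > 0" using far \<open>\<epsilon> < 2\<close> by linarith
  ultimately have "norm g = 1" using g(1) by simp
  moreover have "blinfun_apply \<phi> y > 1 - \<epsilon>" using y unfolding slice_def by simp
  ultimately show ?thesis
    using that y1 diff gx0 gy by (smt (verit))
qed

definition D_point_stage ::
    "'a::real_normed_vector \<Rightarrow> ('a \<Rightarrow>\<^sub>L real) \<Rightarrow> (nat \<Rightarrow> 'a) \<Rightarrow> (nat \<Rightarrow> ('a \<Rightarrow>\<^sub>L real)) \<Rightarrow> 'a \<Rightarrow> ('a \<Rightarrow>\<^sub>L real) \<Rightarrow> bool"
  where "D_point_stage x0 \<phi> ys gs y g \<longleftrightarrow>
    (\<forall>n. norm (ys n) \<le> 1 \<and> norm (gs n) = 1) \<and> weakly_convergent_to ys y \<and> weakly_convergent_to gs g \<and>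
    (\<lambda>n. blinfun_apply (gs n) (ys n)) \<longlonglongrightarrow> -1 \<and>
    norm y \<le> 1 \<and> blinfun_apply \<phi> y = 1 \<and> g \<in> norming_functionals x0"

lemma D_point_stage_exists:
  fixes x0 :: "'a::banach"
  assumes refl: "reflexive_space TYPE('a)" and D: "is_D_point x0" and \<phi>: "\<phi> \<in> norming_functionals x0"
  shows "\<exists>ys gs y g. D_point_stage x0 \<phi> ys gs y g"
proof -
  have x0: "norm x0 = 1" using D unfolding is_D_point_def unit_sphere_def by simp
  define \<epsilon> where "\<epsilon> n = inverse (real (Suc n))" for n
  have "0 < \<epsilon> n" "\<epsilon> n < 2" for n
    using inverse_le_1_iff[of "real (Suc n)"] unfolding \<epsilon>_def by auto
  then have "\<forall>n. \<exists>y g. norm y \<le> 1 \<and> blinfun_apply \<phi> y > 1 - \<epsilon> n \<and> norm g = 1 \<and>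
      blinfun_apply g x0 > 1 - \<epsilon> n \<and> blinfun_apply g y < -1 + \<epsilon> n"
    using D_point_slice_witness[OF D \<phi>] by metis
  then obtain y g where y: "\<And>n. norm (y n) \<le> 1" "\<And>n. blinfun_apply \<phi> (y n) > 1 - \<epsilon> n"
    and g: "\<And>n. norm (g n) = 1" "\<And>n. blinfun_apply (g n) x0 > 1 - \<epsilon> n"
      "\<And>n. blinfun_apply (g n) (y n) < -1 + \<epsilon> n"
    by metis
  obtain r yl gl where r: "strict_mono r"
    and yl: "weakly_convergent_to (y \<circ> r) yl" and gl: "weakly_convergent_to (g \<circ> r) gl"
    using reflexive_space_weakly_convergent_subseq_pair[OF refl, of y 1 g 1] y(1) g(1) by auto
  have \<epsilon>r: "(\<lambda>n. \<epsilon> (r n)) \<longlonglongrightarrow> 0"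
    using LIMSEQ_subseq_LIMSEQ[OF LIMSEQ_inverse_real_of_nat r] unfolding \<epsilon>_def o_def .
  have bound: "\<bar>blinfun_apply f v\<bar> \<le> 1" if "norm f \<le> 1" "norm v \<le> 1" for f :: "'a \<Rightarrow>\<^sub>L real" and v
    using norm_blinfun[of f v] that by (simp add: mult_le_one order_trans)
  have \<phi>1: "norm \<phi> \<le> 1" "blinfun_apply \<phi> x0 = 1" using \<phi> unfolding norming_functionals_def by auto
  have "(\<lambda>n. blinfun_apply (g (r n)) (y (r n))) \<longlonglongrightarrow> -1"
    using g(3) bound[of "g _" "y _"] g(1) y(1)
    by (intro LIMSEQ_if_abs_diff_le[OF _ \<epsilon>r]) (smt (verit))
  moreover have "blinfun_apply \<phi> yl = 1"
  proof -
    have "(\<lambda>n. blinfun_apply \<phi> (y (r n))) \<longlonglongrightarrow> 1"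
      using y(2) bound[OF \<phi>1(1) y(1)] by (intro LIMSEQ_if_abs_diff_le[OF _ \<epsilon>r]) (smt (verit))
    moreover have "(\<lambda>n. blinfun_apply \<phi> (y (r n))) \<longlonglongrightarrow> blinfun_apply \<phi> yl"
      using yl unfolding weakly_convergent_to_def by auto
    ultimately show ?thesis using LIMSEQ_unique by blast
  qed
  moreover have "gl \<in> norming_functionals x0"
  proof -
    have "(\<lambda>n. blinfun_apply (g (r n)) x0) \<longlonglongrightarrow> 1"
      using g(2) bound[of "g _" x0] g(1) x0 by (intro LIMSEQ_if_abs_diff_le[OF _ \<epsilon>r]) (smt (verit))
    moreover have "(\<lambda>n. blinfun_apply (g (r n)) x0) \<longlonglongrightarrow> blinfun_apply gl x0"
      using weakly_convergent_to_dual_apply[OF gl] by simp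
    ultimately have "blinfun_apply gl x0 = 1" using LIMSEQ_unique by blast
    moreover have "norm gl \<le> 1" using weakly_convergent_to_norm_le[OF gl] g(1) by simp
    ultimately show ?thesis using norming_functionals_iff[OF x0] by blast
  qed
  moreover have "norm yl \<le> 1" using weakly_convergent_to_norm_le[OF yl] y(1) by simp
  ultimately have "D_point_stage x0 \<phi> (y \<circ> r) (g \<circ> r) yl gl"
    unfolding D_point_stage_def using y(1) g(1) yl gl by simp
  then show ?thesis by blast
qed

lemma midpoint_norming_functionals:
  assumes "norm x = 1" "\<phi> \<in> norming_functionals x" "\<psi> \<in> norming_functionals x"
  shows "(1/2) *\<^sub>R (\<phi> + \<psi>) \<in> norming_functionals x"
proof -
  have "norm ((1/2) *\<^sub>R (\<phi> + \<psi>)) \<le> (1/2) * (norm \<phi> + norm \<psi>)"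
    using norm_triangle_ineq[of \<phi> \<psi>] by simp
  then show ?thesis
    using assms by (auto simp: norming_functionals_iff blinfun.add_left blinfun.scaleR_left)
qed

lemma midpoint_functional_face:
  fixes \<phi> \<psi> :: "'a::real_normed_vector \<Rightarrow>\<^sub>L real"
  assumes "norm \<phi> \<le> 1" "norm \<psi> \<le> 1" "norm y \<le> 1" "blinfun_apply ((1/2) *\<^sub>R (\<phi> + \<psi>)) y = 1"
  shows "blinfun_apply \<phi> y = 1" "blinfun_apply \<psi> y = 1"
proof -
  have "blinfun_apply \<phi> y \<le> 1" "blinfun_apply \<psi> y \<le> 1"
    using norm_blinfun[of \<phi> y] norm_blinfun[of \<psi> y] assms(1-3)
    by (smt (verit, best) mult_le_one norm_ge_zero real_norm_def)+
  moreover have "blinfun_apply \<phi> y + blinfun_apply \<psi> y = 2"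
    using assms(4) by (simp add: blinfun.add_left blinfun.scaleR_left)
  ultimately show "blinfun_apply \<phi> y = 1" "blinfun_apply \<psi> y = 1" by linarith+
qed

lemma D_point_nested_stages:
  fixes x0 :: "'a::banach"
  assumes refl: "reflexive_space TYPE('a)" and D: "is_D_point x0"
  obtains ys :: "nat \<Rightarrow> nat \<Rightarrow> 'a" and gs :: "nat \<Rightarrow> nat \<Rightarrow> ('a \<Rightarrow>\<^sub>L real)" and yl gl
  where "\<And>k n. norm (ys k n) \<le> 1" "\<And>k n. norm (gs k n) = 1"
    and "\<And>k. weakly_convergent_to (ys k) (yl k)" "\<And>k. weakly_convergent_to (gs k) (gl k)"
    and "\<And>k. (\<lambda>n. blinfun_apply (gs k n) (ys k n)) \<longlonglongrightarrow> -1"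
    and "\<And>k. norm (yl k) \<le> 1" "\<And>k. norm (gl k) \<le> 1"
    and "\<And>j k. j < k \<Longrightarrow> blinfun_apply (gl j) (yl k) = 1"
proof -
  have x0: "norm x0 = 1" using D unfolding is_D_point_def unit_sphere_def by simp
  let ?N = "norming_functionals x0"
  obtain YS GS YL GL where stage: "\<And>\<phi>. \<phi> \<in> ?N \<Longrightarrow> D_point_stage x0 \<phi> (YS \<phi>) (GS \<phi>) (YL \<phi>) (GL \<phi>)"
    using D_point_stage_exists[OF refl D] by metis
  have GL: "GL \<phi> \<in> ?N" and YL: "norm (YL \<phi>) \<le> 1" "blinfun_apply \<phi> (YL \<phi>) = 1" if "\<phi> \<in> ?N" for \<phi>
    using stage[OF that] unfolding D_point_stage_def by auto
  obtain f0 where "f0 \<in> ?N"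
    using exists_norming_functional[of x0] x0 norming_functionals_iff by metis
  txt \<open>Averaging with the limit functional of the current stage shrinks the face: where
    \<open>\<Phi> (Suc k)\<close> attains 1 on the unit ball, so do \<open>\<Phi> k\<close> and \<open>GL (\<Phi> k)\<close>.\<close>
  define \<Phi> where "\<Phi> = rec_nat f0 (\<lambda>k \<phi>. (1/2) *\<^sub>R (\<phi> + GL \<phi>))"
  have \<Phi>_Suc: "\<Phi> (Suc k) = (1/2) *\<^sub>R (\<Phi> k + GL (\<Phi> k))" for k unfolding \<Phi>_def by simp
  have \<Phi>: "\<Phi> k \<in> ?N" for k
    by (induction k) (simp_all add: \<Phi>_def \<open>f0 \<in> ?N\<close> midpoint_norming_functionals[OF x0] GL)
  have norm_le: "norm \<phi> \<le> 1" if "\<phi> \<in> ?N" for \<phi> using that unfolding norming_functionals_def by simp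
  have face: "blinfun_apply (GL (\<Phi> j)) y = 1"
    if "norm y \<le> 1" "blinfun_apply (\<Phi> k) y = 1" "j < k" for j k y
    using that
  proof (induction k)
    case (Suc k)
    note mid = midpoint_functional_face[OF norm_le[OF \<Phi>] norm_le[OF GL[OF \<Phi>]] Suc.prems(1)]
    show ?case
      using Suc.IH[OF Suc.prems(1)] mid[of k] Suc.prems \<Phi>_Suc less_Suc_eq by metis
  qed simp
  show ?thesis
  proof (rule that[of "YS \<circ> \<Phi>" "GS \<circ> \<Phi>" "YL \<circ> \<Phi>" "GL \<circ> \<Phi>"])
    show "blinfun_apply ((GL \<circ> \<Phi>) j) ((YL \<circ> \<Phi>) k) = 1" if "j < k" for j k
      using face[OF YL[OF \<Phi>] that] by simp
  qed (use stage[OF \<Phi>] norm_le[OF GL[OF \<Phi>]] in \<open>auto simp: D_point_stage_def\<close>)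
qed

lemma reflexive_space_antipodal_weak_limits:
  fixes yl :: "nat \<Rightarrow> 'a::banach" and gl :: "nat \<Rightarrow> ('a \<Rightarrow>\<^sub>L real)"
  assumes refl: "reflexive_space TYPE('a)"
    and bound: "\<And>k. norm (yl k) \<le> 1" "\<And>k. norm (gl k) \<le> 1"
    and face: "\<And>j k. j < k \<Longrightarrow> blinfun_apply (gl j) (yl k) = 1"
  obtains r y g where "strict_mono r" "weakly_convergent_to (yl \<circ> r) y" "weakly_convergent_to (gl \<circ> r) g"
    and "norm y = 1" "norm g = 1" "blinfun_apply g y = 1"
proof -
  obtain r y g where r: "strict_mono r"
    and y: "weakly_convergent_to (yl \<circ> r) y" and g: "weakly_convergent_to (gl \<circ> r) g"
    by (rule reflexive_space_weakly_convergent_subseq_pair[OF refl bound])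
  have gl_y: "blinfun_apply (gl j) y = 1" for j
  proof -
    have "\<forall>\<^sub>F k in sequentially. blinfun_apply (gl j) (yl (r k)) = 1"
      unfolding eventually_sequentially
    proof (intro exI allI impI)
      fix k assume "Suc j \<le> k"
      then show "blinfun_apply (gl j) (yl (r k)) = 1" using face seq_suble[OF r, of k] by simp
    qed
    then have "(\<lambda>k. blinfun_apply (gl j) (yl (r k))) \<longlonglongrightarrow> 1" by (rule tendsto_eventually)
    moreover have "(\<lambda>k. blinfun_apply (gl j) (yl (r k))) \<longlonglongrightarrow> blinfun_apply (gl j) y"
      using y unfolding weakly_convergent_to_def by auto
    ultimately show ?thesis using LIMSEQ_unique by blast
  qed
  have "(\<lambda>k. blinfun_apply (gl (r k)) y) \<longlonglongrightarrow> blinfun_apply g y"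
    using weakly_convergent_to_dual_apply[OF g] by simp
  then have gy: "blinfun_apply g y = 1" using gl_y by (simp add: LIMSEQ_const_iff)
  have "norm y \<le> 1" "norm g \<le> 1"
    using weakly_convergent_to_norm_le[OF y] weakly_convergent_to_norm_le[OF g] bound by auto
  moreover have "1 \<le> norm g * norm y" using norm_blinfun[of g y] gy by simp
  ultimately have "norm y = 1" "norm g = 1"
    by (smt (verit, best) mult_le_one mult_left_le_one_le mult_right_le_one_le norm_ge_zero)+
  with that r y g gy show ?thesis by blast
qed

lemma reflexive_space_antipodal_diagonal:
  fixes ys :: "nat \<Rightarrow> nat \<Rightarrow> 'a::banach" and gs :: "nat \<Rightarrow> nat \<Rightarrow> ('a \<Rightarrow>\<^sub>L real)"
  assumes refl: "reflexive_space TYPE('a)"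
    and bound: "\<And>k n. norm (ys k n) \<le> 1" "\<And>k n. norm (gs k n) = 1"
    and ys: "\<And>k. weakly_convergent_to (ys k) (yl k)" and gs: "\<And>k. weakly_convergent_to (gs k) (gl k)"
    and pairing: "\<And>k. (\<lambda>n. blinfun_apply (gs k n) (ys k n)) \<longlonglongrightarrow> -1"
    and yl: "weakly_convergent_to yl y" and gl: "weakly_convergent_to gl g"
  obtains z :: "nat \<Rightarrow> 'a" and w :: "nat \<Rightarrow> ('a \<Rightarrow>\<^sub>L real)"
  where "\<And>k. norm (z k) \<le> 1" "\<And>k. z k \<noteq> 0" "\<And>k. norm (w k) = 1"
    and "weakly_convergent_to z y" "weakly_convergent_to w g"
    and "(\<lambda>k. blinfun_apply (w k) (z k)) \<longlonglongrightarrow> -1"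
proof -
  obtain N1 where N1: "\<And>m. \<forall>k. N1 k \<le> m k \<Longrightarrow> weakly_convergent_to (\<lambda>k. ys k (m k)) y"
    using reflexive_space_weak_diagonal[OF refl bound(1) ys yl] by blast
  obtain N2 where N2: "\<And>m. \<forall>k. N2 k \<le> m k \<Longrightarrow> weakly_convergent_to (\<lambda>k. gs k (m k)) g"
    using reflexive_space_weak_diagonal[OF reflexive_space_dual[OF refl], of gs 1 gl g] bound(2) gs gl
    by auto
  have "\<exists>N. \<forall>n\<ge>N. blinfun_apply (gs k n) (ys k n) < -1 + inverse (real (Suc k))" for k
    using order_tendstoD(2)[OF pairing[of k], of "-1 + inverse (real (Suc k))"]
    unfolding eventually_sequentially by simp
  then obtain N3
    where N3: "\<And>k n. N3 k \<le> n \<Longrightarrow> blinfun_apply (gs k n) (ys k n) < -1 + inverse (real (Suc k))"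
    by metis
  define m where "m k = max (N1 k) (max (N2 k) (N3 k))" for k
  define z where "z k = ys k (m k)" for k
  define w where "w k = gs k (m k)" for k
  have wz_upper: "blinfun_apply (w k) (z k) < -1 + inverse (real (Suc k))" for k
    unfolding w_def z_def by (rule N3) (simp add: m_def le_max_iff_disj)
  have wz_lower: "-1 \<le> blinfun_apply (w k) (z k)" for k
    using norm_blinfun[of "w k" "z k"] bound unfolding w_def z_def
    by (smt (verit, best) mult_le_one norm_ge_zero real_norm_def)
  show ?thesis
  proof
    show "norm (z k) \<le> 1" "norm (w k) = 1" for k unfolding z_def w_def using bound by auto
    show "z k \<noteq> 0" for k using wz_upper[of k] inverse_le_1_iff[of "real (Suc k)"] by auto
    show "weakly_convergent_to z y" unfolding z_def by (rule N1) (simp add: m_def le_max_iff_disj)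
    show "weakly_convergent_to w g" unfolding w_def by (rule N2) (simp add: m_def le_max_iff_disj)
    show "(\<lambda>k. blinfun_apply (w k) (z k)) \<longlonglongrightarrow> -1"
      using wz_upper wz_lower
      by (intro LIMSEQ_if_abs_diff_le[OF _ LIMSEQ_inverse_real_of_nat]) (smt (verit))
  qed
qed

lemma seq_super_Delta_points_of_antipodal_sequences:
  fixes z :: "nat \<Rightarrow> 'a::real_normed_vector" and w :: "nat \<Rightarrow> ('a \<Rightarrow>\<^sub>L real)"
  assumes z: "\<And>k. norm (z k) \<le> 1" "\<And>k. z k \<noteq> 0" and w: "\<And>k. norm (w k) = 1"
    and conv: "weakly_convergent_to z y" "weakly_convergent_to w g"
    and wz: "(\<lambda>k. blinfun_apply (w k) (z k)) \<longlonglongrightarrow> -1"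
    and gy: "norm y = 1" "norm g = 1" "blinfun_apply g y = 1"
  shows "is_seq_super_Delta_point y" "is_seq_super_Delta_point g"
proof -
  have "(\<lambda>k. blinfun_apply (w k) y) \<longlonglongrightarrow> 1"
    using weakly_convergent_to_dual_apply[OF conv(2), of y] gy(3) by simp
  then show "is_seq_super_Delta_point y"
    using z w conv(1) wz gy(1) by (intro seq_super_Delta_point_if_antipodal[of y z w]) auto
  show "is_seq_super_Delta_point g"
  proof (rule seq_super_Delta_point_if_antipodal[of g w "point_eval \<circ> z"])
    show "norm ((point_eval \<circ> z) k) \<le> 1" for k
      using norm_point_eval_le[of "z k"] z(1)[of k] by simp
    have "(\<lambda>k. blinfun_apply g (z k)) \<longlonglongrightarrow> blinfun_apply g y"
      using conv(1) unfolding weakly_convergent_to_def by blast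
    then show "(\<lambda>k. blinfun_apply ((point_eval \<circ> z) k) g) \<longlonglongrightarrow> 1"
      using gy(3) by simp
    show "(\<lambda>k. blinfun_apply ((point_eval \<circ> z) k) (w k)) \<longlonglongrightarrow> -1" using wz by simp
    show "norm (w k) \<le> 1" "w k \<noteq> 0" for k using w(1)[of k] by auto
  qed (use gy(2) conv(2) in auto)
qed

lemma reflexive_space_antipodal_sequences:
  fixes ys :: "nat \<Rightarrow> nat \<Rightarrow> 'a::banach" and gs :: "nat \<Rightarrow> nat \<Rightarrow> ('a \<Rightarrow>\<^sub>L real)"
  assumes refl: "reflexive_space TYPE('a)"
    and bound: "\<And>k n. norm (ys k n) \<le> 1" "\<And>k n. norm (gs k n) = 1"
    and ys: "\<And>k. weakly_convergent_to (ys k) (yl k)" and gs: "\<And>k. weakly_convergent_to (gs k) (gl k)"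
    and pairing: "\<And>k. (\<lambda>n. blinfun_apply (gs k n) (ys k n)) \<longlonglongrightarrow> -1"
    and limit_bound: "\<And>k. norm (yl k) \<le> 1" "\<And>k. norm (gl k) \<le> 1"
    and face: "\<And>j k. j < k \<Longrightarrow> blinfun_apply (gl j) (yl k) = 1"
  obtains z :: "nat \<Rightarrow> 'a" and w :: "nat \<Rightarrow> ('a \<Rightarrow>\<^sub>L real)" and y g
  where "\<And>k. norm (z k) \<le> 1" "\<And>k. z k \<noteq> 0" "\<And>k. norm (w k) = 1"
    and "weakly_convergent_to z y" "weakly_convergent_to w g"
    and "(\<lambda>k. blinfun_apply (w k) (z k)) \<longlonglongrightarrow> -1"
    and "norm y = 1" "norm g = 1" "blinfun_apply g y = 1"
proof -
  obtain r y g where "strict_mono r" and yl: "weakly_convergent_to (yl \<circ> r) y"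
    and gl: "weakly_convergent_to (gl \<circ> r) g" and yg: "norm y = 1" "norm g = 1" "blinfun_apply g y = 1"
    by (rule reflexive_space_antipodal_weak_limits[OF refl limit_bound face])
  have sub: "norm ((ys \<circ> r) k n) \<le> 1" "norm ((gs \<circ> r) k n) = 1"
    "weakly_convergent_to ((ys \<circ> r) k) ((yl \<circ> r) k)" "weakly_convergent_to ((gs \<circ> r) k) ((gl \<circ> r) k)"
    "(\<lambda>n. blinfun_apply ((gs \<circ> r) k n) ((ys \<circ> r) k n)) \<longlonglongrightarrow> -1" for k n
    using bound ys gs pairing by simp_all
  obtain z :: "nat \<Rightarrow> 'a" and w :: "nat \<Rightarrow> ('a \<Rightarrow>\<^sub>L real)"
    where "\<And>k. norm (z k) \<le> 1" "\<And>k. z k \<noteq> 0" "\<And>k. norm (w k) = 1"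
    and "weakly_convergent_to z y" "weakly_convergent_to w g"
    and "(\<lambda>k. blinfun_apply (w k) (z k)) \<longlonglongrightarrow> -1"
    using reflexive_space_antipodal_diagonal[OF refl sub yl gl] by blast
  from that[OF this yg] show ?thesis .
qed

lemma D_point_seq_super_Delta_points:
  fixes x0 :: "'a::banach"
  assumes refl: "reflexive_space TYPE('a)" and D: "is_D_point x0"
  obtains y :: 'a and g :: "'a \<Rightarrow>\<^sub>L real"
  where "is_seq_super_Delta_point y" "is_seq_super_Delta_point g"
proof -
  obtain ys :: "nat \<Rightarrow> nat \<Rightarrow> 'a" and gs :: "nat \<Rightarrow> nat \<Rightarrow> ('a \<Rightarrow>\<^sub>L real)" and yl gl
    where stages: "\<And>k n. norm (ys k n) \<le> 1" "\<And>k n. norm (gs k n) = 1"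
      "\<And>k. weakly_convergent_to (ys k) (yl k)" "\<And>k. weakly_convergent_to (gs k) (gl k)"
      "\<And>k. (\<lambda>n. blinfun_apply (gs k n) (ys k n)) \<longlonglongrightarrow> -1"
      "\<And>k. norm (yl k) \<le> 1" "\<And>k. norm (gl k) \<le> 1"
      "\<And>j k. j < k \<Longrightarrow> blinfun_apply (gl j) (yl k) = 1"
    using D_point_nested_stages[OF refl D] by blast
  obtain z :: "nat \<Rightarrow> 'a" and w :: "nat \<Rightarrow> ('a \<Rightarrow>\<^sub>L real)" and y g
    where "\<And>k. norm (z k) \<le> 1" "\<And>k. z k \<noteq> 0" "\<And>k. norm (w k) = 1"
    and "weakly_convergent_to z y" "weakly_convergent_to w g"
    and "(\<lambda>k. blinfun_apply (w k) (z k)) \<longlonglongrightarrow> -1"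
    and "norm y = 1" "norm g = 1" "blinfun_apply g y = 1"
    using reflexive_space_antipodal_sequences[OF refl stages] by blast
  from that[OF seq_super_Delta_points_of_antipodal_sequences[OF this]] show ?thesis .
qed

theorem corollary5p24:
  assumes "reflexive_space TYPE('a::banach)"
    and "\<exists>x::'a. is_D_point x"
  shows "(\<exists>x::'a. is_seq_super_Delta_point x)
       \<and> (\<exists>f::'a \<Rightarrow>\<^sub>L real. is_seq_super_Delta_point f)
       \<and> \<not> kadets_klee TYPE('a)
       \<and> \<not> kadets_klee TYPE('a \<Rightarrow>\<^sub>L real)"
proof -
  obtain x0 :: 'a where "is_D_point x0" using assms(2) by blast
  then obtain y :: 'a and g :: "'a \<Rightarrow>\<^sub>L real"
    where y: "is_seq_super_Delta_point y" and g: "is_seq_super_Delta_point g"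
    by (rule D_point_seq_super_Delta_points[OF assms(1)])
  show ?thesis
    using y g not_kadets_klee_if_seq_super_Delta_point[OF y] not_kadets_klee_if_seq_super_Delta_point[OF g]
    by blast
qed

end
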